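(* Let $n\ge1$ and $k$ be integers. If the complete bipartite graph $K_{n,n}$ is $k$-removable, then $k> n-\sqrt{2n(\log n+1)}$.
   Context: $\log$ is the natural logarithm. For a graph $G$, $f:V(G)\to\mathbb Z$, $u\in V(G)$ and $W\subseteq N(u)$, $\mathsf{DelSave}(G,f,u,W)$ outputs $G'=G-u$ and $f'$ with $f'(x)=f(x)-1$ for $x\in N(u)\setminus W$ and $f'(x)=f(x)$ otherwise; it is legal if $f(u)>\sum_{w\in W}f(w)$ and $f'(x)\ge1$ for all $x\in V(G')$. $G$ is $f$-removable if all vertices can be deleted by successive legal $\mathsf{DelSave}$ applications, each time replacing $(G,f)$ by the output; $G$ is $k$-removable if it is $f$-removable for the constant function $f\equiv k$. *)

theory Defs
  imports "HOL-Analysis.Analysis"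
begin

text \<open>A finite simple graph is given by a vertex set V and a symmetric irreflexive
 edge relation E (only edges inside V matter).  Neighbourhood of u in (V,E):\<close>

definition nbhd :: "'a set \<Rightarrow> ('a \<Rightarrow> 'a \<Rightarrow> bool) \<Rightarrow> 'a \<Rightarrow> 'a set" where
  "nbhd V E u = {x \<in> V. x \<noteq> u \<and> E u x}"

definition delsave_fun ::
  "'a set \<Rightarrow> ('a \<Rightarrow> 'a \<Rightarrow> bool) \<Rightarrow> ('a \<Rightarrow> int) \<Rightarrow> 'a \<Rightarrow> 'a set \<Rightarrow> ('a \<Rightarrow> int)" where
  "delsave_fun V E f u W = (\<lambda>x. if x \<in> nbhd V E u - W then f x - 1 else f x)"

definition delsave_legal ::
  "'a set \<Rightarrow> ('a \<Rightarrow> 'a \<Rightarrow> bool) \<Rightarrow> ('a \<Rightarrow> int) \<Rightarrow> 'a \<Rightarrow> 'a set \<Rightarrow> bool" where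
  "delsave_legal V E f u W \<longleftrightarrow>
     u \<in> V \<and> W \<subseteq> nbhd V E u \<and> f u > (\<Sum>w\<in>W. f w) \<and>
     (\<forall>x \<in> V - {u}. delsave_fun V E f u W x \<ge> 1)"

text \<open>f-removability: all vertices can be deleted by successive legal DelSave steps.
 (The edge relation of G - u is E restricted to V - {u}, which is implicit since
 only vertices in the current vertex set are ever considered.)\<close>

inductive f_removable :: "'a set \<Rightarrow> ('a \<Rightarrow> 'a \<Rightarrow> bool) \<Rightarrow> ('a \<Rightarrow> int) \<Rightarrow> bool" where
  empty: "f_removable {} E f"
| step: "delsave_legal V E f u W \<Longrightarrow>
         f_removable (V - {u}) E (delsave_fun V E f u W) \<Longrightarrow> f_removable V E f"

definition k_removable :: "'a set \<Rightarrow> ('a \<Rightarrow> 'a \<Rightarrow> bool) \<Rightarrow> int \<Rightarrow> bool" where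
  "k_removable V E k \<longleftrightarrow> f_removable V E (\<lambda>_. k)"

definition Knn_vertices :: "nat \<Rightarrow> (bool \<times> nat) set" where
  "Knn_vertices n = UNIV \<times> {..<n}"

definition Knn_edges :: "bool \<times> nat \<Rightarrow> bool \<times> nat \<Rightarrow> bool" where
  "Knn_edges x y \<longleftrightarrow> fst x \<noteq> fst y"

end

theory Submission
  imports Defs
begin

text \<open>Put \<open>d = n - k\<close>. Along a removal sequence of \<open>K\<^sub>n\<^sub>,\<^sub>n\<close>, every remaining vertex
  \<open>v\<close> keeps nonnegative slack \<open>f v + d - q\<^sub>v\<close>, where \<open>q\<^sub>v\<close> counts the remaining vertices on the
  other side. Deleting \<open>u\<close> from a side with \<open>p\<close> remaining vertices while saving \<open>W\<close> removes the
  slack of \<open>u\<close> and adds \<open>|W|\<close> to the total slack; every saved vertex has \<open>f \<ge> p - d\<close>, so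
  \<open>|W| \<le> (f u - 1) / max (p - d) 1\<close>. A potential of the two side sizes whose decrement is
  bounded by this net loss therefore never exceeds the total slack, which is \<open>0\<close> initially.
  At \<open>(n, n)\<close> the potential equals \<open>(d + 1)\<^sup>2 - 2 (k - 1) ln k\<close>, whence
  \<open>(d + 1)\<^sup>2 \<le> 2 n (ln n + 1)\<close>.\<close>

definition side_count :: "(bool \<times> 'a) set \<Rightarrow> bool \<Rightarrow> nat" where
  "side_count V b = card {x \<in> V. fst x = b}"

definition slack :: "int \<Rightarrow> (bool \<times> 'a) set \<Rightarrow> (bool \<times> 'a \<Rightarrow> int) \<Rightarrow> bool \<times> 'a \<Rightarrow> int" where
  "slack d V f v = f v + d - int (side_count V (\<not> fst v))"

definition ln_correction :: "real \<Rightarrow> real \<Rightarrow> real" where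
  "ln_correction P Q = P * Q - Q * ln (P + 1) - P * ln (Q + 1)"

text \<open>For \<open>P = p - d - 1 \<ge> 1\<close> and \<open>Q = q - d - 1 \<ge> 1\<close> this is
  \<open>(d + 1)\<^sup>2 - Q ln (P + 1) - P ln (Q + 1)\<close>; the logarithm absorbs the harmonic sums
  \<open>\<Sum> 1 / (P + 1)\<close> coming from the bound on \<open>|W|\<close>.\<close>

definition removal_potential :: "int \<Rightarrow> int \<Rightarrow> int \<Rightarrow> real" where
  "removal_potential d p q = real_of_int ((d + 1) * (p + q) - p * q)
     + ln_correction (of_int (max (p - d - 1) 0)) (of_int (max (q - d - 1) 0))"

lemma removal_potential_commute: "removal_potential d p q = removal_potential d q p"
  by (simp add: removal_potential_def ln_correction_def algebra_simps)

lemma inverse_le_ln_diff: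
  fixes x :: real
  assumes "x > 0"
  shows "1 / (x + 1) \<le> ln (x + 1) - ln x"
proof -
  have "ln (x / (x + 1)) \<le> x / (x + 1) - 1"
    using assms by (intro ln_le_minus_one) auto
  moreover have "ln (x / (x + 1)) = ln x - ln (x + 1)"
    using assms by (simp add: ln_div)
  moreover have "x / (x + 1) - 1 = - (1 / (x + 1))"
    using assms by (simp add: field_simps)
  ultimately show ?thesis by linarith
qed

lemma ln_correction_decrement_le:
  fixes P :: int and Q :: real
  assumes "Q \<ge> 0"
  shows "ln_correction (of_int (max P 0)) Q - ln_correction (of_int (max (P - 1) 0)) Q
    \<le> Q * of_int (max P 0) / (of_int (max P 0) + 1)"
proof (cases "P \<ge> 1")
  case True
  then have "ln_correction (of_int P) Q - ln_correction (of_int (P - 1)) Q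
      = Q - Q * (ln (of_int P + 1) - ln (of_int P)) - ln (Q + 1)"
    by (simp add: ln_correction_def algebra_simps)
  also have "\<dots> \<le> Q - Q * (1 / (of_int P + 1))"
  proof -
    have "Q * (1 / (of_int P + 1)) \<le> Q * (ln (of_int P + 1) - ln (of_int P))"
      using assms True inverse_le_ln_diff[of "of_int P"] by (intro mult_left_mono) auto
    moreover have "ln (Q + 1) \<ge> 0"
      using assms by simp
    ultimately show ?thesis by linarith
  qed
  also have "\<dots> = Q * of_int P / (of_int P + 1)"
    using True by (simp add: field_simps)
  finally show ?thesis
    using True by simp
qed (simp add: ln_correction_def)

lemma removal_potential_decrement_le:
  fixes d p q f w :: int
  assumes "f \<ge> 1" "f \<ge> q - d" "w \<ge> 0" "w * max (p - d) 1 \<le> f - 1"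
  shows "removal_potential d p q - removal_potential d (p - 1) q \<le> of_int (f + d - q - w)"
proof -
  define P where "P = max (p - d - 1) 0"
  define Q where "Q = max (q - d - 1) 0"
  have "P + 1 = max (p - d) 1" and "Q \<le> f - 1"
    using assms(1,2) by (auto simp: P_def Q_def)
  have "real_of_int w \<le> (f - 1) / (P + 1)"
    using assms(4) \<open>P + 1 = max (p - d) 1\<close>
    by (simp add: P_def field_simps flip: of_int_mult of_int_le_iff)
  have "ln_correction P Q - ln_correction (max (p - 1 - d - 1) 0) Q \<le> Q * P / (P + 1)"
    using ln_correction_decrement_le[of Q "p - d - 1"] by (simp add: P_def Q_def algebra_simps)
  also have "\<dots> \<le> (f - 1) * P / (P + 1)"
    using \<open>Q \<le> f - 1\<close> by (simp add: P_def divide_right_mono mult_right_mono)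
  also have "\<dots> = (f - 1) - (f - 1) / (P + 1)"
    by (simp add: P_def field_simps)
  also have "\<dots> \<le> f - 1 - w"
    using \<open>real_of_int w \<le> (f - 1) / (P + 1)\<close> by simp
  finally show ?thesis
    by (simp add: removal_potential_def P_def Q_def algebra_simps)
qed

lemma delsave_legal_ge_one:
  assumes "delsave_legal V E f u W" "x \<in> V"
  shows "1 \<le> f x"
proof (cases "x = u")
  case True
  have "\<forall>w \<in> W. 1 \<le> f w"
    using assms(1) by (fastforce simp: delsave_legal_def delsave_fun_def nbhd_def split: if_splits)
  then have "0 \<le> (\<Sum>w\<in>W. f w)"
    by (intro sum_nonneg) auto
  then show ?thesis
    using assms(1) True by (simp add: delsave_legal_def)
next
  case False
  then have "1 \<le> delsave_fun V E f u W x"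
    using assms by (simp add: delsave_legal_def)
  then show ?thesis
    by (simp add: delsave_fun_def split: if_splits)
qed

lemma f_removable_ge_one:
  assumes "f_removable V E f" "x \<in> V"
  shows "1 \<le> f x"
  using assms by cases (auto intro: delsave_legal_ge_one)

lemma nbhd_Knn_edges: "nbhd V Knn_edges u = {x \<in> V. fst x \<noteq> fst u}"
  by (auto simp: nbhd_def Knn_edges_def)

lemma side_count_remove:
  assumes "finite V" "u \<in> V"
  shows "int (side_count (V - {u}) b) = int (side_count V b) - (if fst u = b then 1 else 0)"
proof -
  have "{x \<in> V - {u}. fst x = b} = {x \<in> V. fst x = b} - {u}"
    by auto
  moreover have "fst u = b \<Longrightarrow> side_count V b \<ge> 1"
    using assms card_mono[of "{x \<in> V. fst x = b}" "{u}"] by (auto simp: side_count_def)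
  ultimately show ?thesis
    using assms by (auto simp: side_count_def)
qed

lemma slack_delsave_Knn_edges:
  assumes "delsave_legal V Knn_edges f u W" "finite V" "x \<in> V - {u}"
  shows "slack d (V - {u}) (delsave_fun V Knn_edges f u W) x
    = slack d V f x + (if x \<in> W then 1 else 0)"
proof -
  have "W \<subseteq> {x \<in> V. fst x \<noteq> fst u}" "u \<in> V"
    using assms(1) by (auto simp: delsave_legal_def nbhd_Knn_edges)
  then show ?thesis
    using assms(2,3) side_count_remove[OF assms(2) \<open>u \<in> V\<close>, of "\<not> fst x"]
    by (auto simp: slack_def delsave_fun_def nbhd_Knn_edges)
qed

lemma slack_sum_delsave_Knn_edges:
  assumes "delsave_legal V Knn_edges f u W" "finite V"
  shows "(\<Sum>v\<in>V - {u}. slack d (V - {u}) (delsave_fun V Knn_edges f u W) v)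
    = (\<Sum>v\<in>V. slack d V f v) - slack d V f u + int (card W)"
proof -
  have "u \<in> V" "W \<subseteq> V - {u}"
    using assms(1) by (auto simp: delsave_legal_def nbhd_def)
  have "(\<Sum>v\<in>V - {u}. slack d (V - {u}) (delsave_fun V Knn_edges f u W) v)
      = (\<Sum>v\<in>V - {u}. slack d V f v + (if v \<in> W then 1 else 0))"
    using assms by (intro sum.cong) (auto simp: slack_delsave_Knn_edges)
  also have "\<dots> = (\<Sum>v\<in>V - {u}. slack d V f v) + int (card W)"
    using assms(2) \<open>W \<subseteq> V - {u}\<close>
    by (simp add: sum.distrib sum.If_cases Int_absorb1)
  also have "(\<Sum>v\<in>V - {u}. slack d V f v) = (\<Sum>v\<in>V. slack d V f v) - slack d V f u"
    using assms(2) \<open>u \<in> V\<close> by (simp add: sum_diff1)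
  finally show ?thesis .
qed

lemma card_saved_le_Knn_edges:
  assumes "delsave_legal V Knn_edges f u W" "\<forall>v\<in>V. 0 \<le> slack d V f v"
  shows "int (card W) * max (int (side_count V (fst u)) - d) 1 \<le> f u - 1"
proof -
  have "max (int (side_count V (fst u)) - d) 1 \<le> f w" if "w \<in> W" for w
  proof -
    have "w \<in> V" "fst w \<noteq> fst u"
      using assms(1) that by (auto simp: delsave_legal_def nbhd_Knn_edges)
    then have "(\<not> fst w) = fst u"
      by auto
    then show ?thesis
      using assms(2) \<open>w \<in> V\<close> delsave_legal_ge_one[OF assms(1) \<open>w \<in> V\<close>]
      by (auto simp: slack_def)
  qed
  then have "(\<Sum>w\<in>W. max (int (side_count V (fst u)) - d) 1) \<le> (\<Sum>w\<in>W. f w)"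
    by (intro sum_mono)
  then show ?thesis
    using assms(1) by (simp add: delsave_legal_def mult.commute)
qed

lemma removal_potential_le_slack_sum:
  assumes "f_removable V Knn_edges f" "finite V" "d \<ge> 0" "\<forall>v\<in>V. 0 \<le> slack d V f v"
  shows "removal_potential d (side_count V True) (side_count V False) \<le> (\<Sum>v\<in>V. slack d V f v)"
  using assms
proof (induction V Knn_edges f rule: f_removable.induct)
  case (empty f)
  then show ?case
    by (simp add: removal_potential_def ln_correction_def side_count_def)
next
  case (step V f u W)
  define f' where "f' = delsave_fun V Knn_edges f u W"
  define p where "p = int (side_count V (fst u))"
  define q where "q = int (side_count V (\<not> fst u))"
  have "u \<in> V"
    using step.hyps(1) by (simp add: delsave_legal_def)
  have "\<forall>v\<in>V - {u}. 0 \<le> slack d (V - {u}) f' v"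
    using step.hyps(1) step.prems by (simp add: f'_def slack_delsave_Knn_edges)
  then have IH: "removal_potential d (side_count (V - {u}) True) (side_count (V - {u}) False)
      \<le> (\<Sum>v\<in>V - {u}. slack d (V - {u}) f' v)"
    using step.hyps(3) step.prems by (simp add: f'_def)
  have "removal_potential d (side_count (V - {u}) True) (side_count (V - {u}) False)
      = removal_potential d (p - 1) q"
    using side_count_remove[OF \<open>finite V\<close> \<open>u \<in> V\<close>]
    by (cases "fst u") (simp_all add: p_def q_def removal_potential_commute)
  moreover have "removal_potential d (side_count V True) (side_count V False)
      = removal_potential d p q"
    by (cases "fst u") (simp_all add: p_def q_def removal_potential_commute)
  moreover have "removal_potential d p q - removal_potential d (p - 1) q
      \<le> of_int (f u + d - q - int (card W))"
  proof (rule removal_potential_decrement_le)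
    show "1 \<le> f u"
      using delsave_legal_ge_one[OF step.hyps(1) \<open>u \<in> V\<close>] .
    show "q - d \<le> f u"
      using step.prems(3) \<open>u \<in> V\<close> by (auto simp: slack_def q_def)
    show "int (card W) * max (p - d) 1 \<le> f u - 1"
      using card_saved_le_Knn_edges[OF step.hyps(1) step.prems(3)] by (simp add: p_def)
  qed simp
  moreover have "slack d V f u = f u + d - q"
    by (simp add: slack_def q_def)
  moreover have "real_of_int (\<Sum>v\<in>V - {u}. slack d (V - {u}) f' v)
      = real_of_int (\<Sum>v\<in>V. slack d V f v) - slack d V f u + card W"
    using slack_sum_delsave_Knn_edges[OF step.hyps(1) \<open>finite V\<close>, of d, folded f'_def]
    by (simp only: of_int_add of_int_diff of_int_of_nat_eq)
  ultimately show ?case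
    using IH by linarith
qed

lemma removal_potential_diagonal:
  fixes k d :: int
  assumes "k \<ge> 1"
  shows "removal_potential d (k + d) (k + d)
    = (real_of_int d + 1)\<^sup>2 - 2 * (real_of_int k - 1) * ln (real_of_int k)"
  using assms by (simp add: removal_potential_def ln_correction_def algebra_simps power2_eq_square)

lemma side_count_Knn_vertices: "side_count (Knn_vertices n) b = n"
proof -
  have "{x \<in> Knn_vertices n. fst x = b} = {b} \<times> {..<n}"
    by (auto simp: Knn_vertices_def)
  then show ?thesis
    by (simp add: side_count_def card_cartesian_product)
qed

theorem theorem4p6:
  fixes n :: nat and k :: int
  assumes "n \<ge> 1"
    and "k_removable (Knn_vertices n) Knn_edges k"
  shows "real_of_int k > real n - sqrt (2 * real n * (ln (real n) + 1))"
proof (cases "k > int n")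
  case True
  moreover have "0 \<le> sqrt (2 * real n * (ln (real n) + 1))"
    using assms(1) by simp
  ultimately show ?thesis
    by linarith
next
  case False
  define d where "d = int n - k"
  have removable: "f_removable (Knn_vertices n) Knn_edges (\<lambda>_. k)"
    using assms(2) by (simp add: k_removable_def)
  have "(True, 0) \<in> Knn_vertices n"
    using assms(1) by (simp add: Knn_vertices_def)
  then have "k \<ge> 1"
    using f_removable_ge_one[OF removable] by blast
  have "finite (Knn_vertices n)"
    by (simp add: Knn_vertices_def)
  then have "removal_potential d n n \<le> 0"
    using removal_potential_le_slack_sum[OF removable, of d] False
    by (simp add: side_count_Knn_vertices slack_def d_def)
  then have "(real_of_int d + 1)\<^sup>2 \<le> 2 * (real_of_int k - 1) * ln (real_of_int k)"
    using removal_potential_diagonal[OF \<open>k \<ge> 1\<close>, of d] by (simp add: d_def)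
  also have "\<dots> \<le> 2 * real n * (ln (real n) + 1)"
  proof -
    have "ln (real_of_int k) \<le> ln (real n)"
      using \<open>k \<ge> 1\<close> False by simp
    then have "ln (real_of_int k) \<le> ln (real n) + 1"
      by linarith
    then show ?thesis
      using \<open>k \<ge> 1\<close> False by (intro mult_mono) auto
  qed
  finally have "real_of_int d + 1 \<le> sqrt (2 * real n * (ln (real n) + 1))"
    by (rule real_le_rsqrt)
  then show ?thesis
    by (simp add: d_def)
qed

end
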